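(* Let $S\subseteq V$ with $|S|=\zeta$, and let $G$ be a $d$-colored $d$-regular graph on $V$ having a connected component $C$ with $C\subseteq S$ and $|C|\ge(1-\gamma)z$. Then the verifier $\mathcal{A}_{\mathsf{QMA}}$ described below, given the witness $|S\rangle=\frac{1}{\sqrt{|S|}}\sum_{v\in S}|v\rangle$ and oracle access to $G$, accepts with probability at least $1-3\sqrt{\gamma}$.
   Context: $N=2^n$ (sufficiently large), $|V|=N$; $d=100$, $\ell=N^{1/10}$, $\gamma=N^{-1/10}$, $z=N/\ell=N^{9/10}$, $\zeta=(1+\gamma)z$. A $d$-colored $d$-regular graph has exactly one incident edge of each color $\kappa\in[d]$ at each vertex (self-loops allowed); $G(j,\kappa)$ is the $\kappa$-neighbor of $j$, and the oracle is $|j,\kappa,z\rangle\mapsto|j,\kappa,z\oplus G(j,\kappa)\rangle$. Using two oracle calls one implements $U_{\mathrm{walk}}|j,\kappa\rangle=|G(j,\kappa),\kappa\rangle$ (and its controlled version). Let $|\bar 0_V\rangle=N^{-1/2}\sum_{j\in V}|j\rangle$ and $|\bar0_d\rangle=d^{-1/2}\sum_{\kappa\in[d]}|\kappa\rangle$. The verifier $\mathcal{A}_{\mathsf{QMA}}$ on witness register $W$ (state $|\psi\rangle$): prepare a control qubit in $|+\rangle$ and a color register in $|\bar0_d\rangle$; apply $U_{\mathrm{walk}}$ to $(W,\text{color})$ controlled on the control qubit; measure the control in the $\{|+\rangle,|-\rangle\}$ basis and the color register with $\{|\bar0_d\rangle\langle\bar0_d|,I-|\bar0_d\rangle\langle\bar0_d|\}$,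 rejecting unless the outcomes are $+$ and $\bar0_d$; then measure $W$ with $\{|\bar0_V\rangle\langle\bar0_V|,I-|\bar0_V\rangle\langle\bar0_V|\}$, rejecting on the first outcome and accepting otherwise. *)

theory Defs
  imports Complex_Main
begin

definition NN :: "nat \<Rightarrow> real" where "NN n = real ((2::nat) ^ n)"
definition ell :: "nat \<Rightarrow> real" where "ell n = NN n powr (1/10)"
definition gam :: "nat \<Rightarrow> real" where "gam n = NN n powr (-1/10)"
definition zz :: "nat \<Rightarrow> real" where "zz n = NN n / ell n"
definition zeta :: "nat \<Rightarrow> real" where "zeta n = (1 + gam n) * zz n"

text \<open>A d-colored d-regular graph on V, given by G j k = the k-neighbour of j:
  each vertex has exactly one incident edge of each colour k < d (self-loops allowed),
  i.e. the k-neighbour of the k-neighbour of j is j again.\<close>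
definition colored_regular :: "nat set \<Rightarrow> nat \<Rightarrow> (nat \<Rightarrow> nat \<Rightarrow> nat) \<Rightarrow> bool" where
  "colored_regular V d G \<longleftrightarrow> (\<forall>j\<in>V. \<forall>k<d. G j k \<in> V \<and> G (G j k) k = j)"

definition graph_adj :: "nat \<Rightarrow> (nat \<Rightarrow> nat \<Rightarrow> nat) \<Rightarrow> nat \<Rightarrow> nat \<Rightarrow> bool" where
  "graph_adj d G j u \<longleftrightarrow> (\<exists>k<d. G j k = u \<or> G u k = j)"

definition is_component :: "nat set \<Rightarrow> nat \<Rightarrow> (nat \<Rightarrow> nat \<Rightarrow> nat) \<Rightarrow> nat set \<Rightarrow> bool" where
  "is_component V d G C \<longleftrightarrow> (\<exists>v\<in>V. C = {u. (graph_adj d G)\<^sup>*\<^sup>* v u})"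

text \<open>Quantum states on (control qubit, witness register W, colour register):
  amplitude functions  control (bool: False = |0>, True = |1>)  => vertex => colour => complex.\<close>
type_synonym qstate = "bool \<Rightarrow> nat \<Rightarrow> nat \<Rightarrow> complex"

text \<open>|+> (x) |psi> (x) |0bar_d>\<close>
definition init_state :: "nat \<Rightarrow> (nat \<Rightarrow> complex) \<Rightarrow> qstate" where
  "init_state d psi b j k = (if k < d then psi j / complex_of_real (sqrt 2 * sqrt (real d)) else 0)"

text \<open>Controlled U_walk : |1,j,k> -> |1,G(j,k),k>, identity on control |0>.\<close>
definition ctrl_walk :: "nat set \<Rightarrow> (nat \<Rightarrow> nat \<Rightarrow> nat) \<Rightarrow> qstate \<Rightarrow> qstate" where
  "ctrl_walk V G st b v k = (if b then (\<Sum>j\<in>{j\<in>V. G j k = v}. st True j k) else st False v k)"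

text \<open>Unnormalized state of W after projecting the control onto |+> and the colour onto |0bar_d>.\<close>
definition proj_plus_bar0 :: "nat \<Rightarrow> qstate \<Rightarrow> nat \<Rightarrow> complex" where
  "proj_plus_bar0 d st v =
     (\<Sum>b\<in>(UNIV::bool set). (\<Sum>k<d. st b v k / complex_of_real (sqrt 2 * sqrt (real d))))"

text \<open>Acceptance probability: squared norm of the W-state after the first projection,
  further projected onto the complement of |0bar_V>.\<close>
definition accept_prob :: "nat set \<Rightarrow> nat \<Rightarrow> (nat \<Rightarrow> nat \<Rightarrow> nat) \<Rightarrow> (nat \<Rightarrow> complex) \<Rightarrow> real" where
  "accept_prob V d G psi =
     (let phi = proj_plus_bar0 d (ctrl_walk V G (init_state d psi));
          avg = (\<Sum>u\<in>V. phi u) / of_nat (card V)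
      in (\<Sum>v\<in>V. (cmod (phi v - avg))\<^sup>2))"

definition subset_state :: "nat set \<Rightarrow> nat \<Rightarrow> complex" where
  "subset_state S v = (if v \<in> S then complex_of_real (1 / sqrt (real (card S))) else 0)"

end

theory Submission
  imports Defs
begin

text \<open>For a real witness p the state of W after the first projection is the lazy random walk
  (I + A/d)/2 applied to p. The walk preserves the total amplitude, since each colour acts as a
  permutation of V, and it fixes the subset state on the component C, which is closed under
  neighbours. The acceptance probability is the squared norm of the walked state minus its
  component along the uniform state; so it is at least |C|/|S| - |S|/N, and the parameters make
  this at least 1 - 3 sqrt gamma.\<close>

definition lazy_walk :: "nat \<Rightarrow> (nat \<Rightarrow> nat \<Rightarrow> nat) \<Rightarrow> (nat \<Rightarrow> real) \<Rightarrow> nat \<Rightarrow> real" where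
  "lazy_walk d G p v = (\<Sum>k<d. (p v + p (G v k)) / (2 * real d))"

lemma colored_regular_bij_betw:
  assumes "colored_regular V d G" and "k < d"
  shows "bij_betw (\<lambda>v. G v k) V V"
  by (rule bij_betw_byWitness[where f' = "\<lambda>v. G v k"])
    (use assms in \<open>auto simp: colored_regular_def\<close>)

lemma colored_regular_preimage:
  assumes "colored_regular V d G" and "v \<in> V" and "k < d"
  shows "{j \<in> V. G j k = v} = {G v k}"
  using assms unfolding colored_regular_def by force

lemma is_component_closed:
  assumes "is_component V d G C" and "u \<in> C" and "k < d"
  shows "G u k \<in> C"
proof -
  obtain v where C: "C = {u. (graph_adj d G)\<^sup>*\<^sup>* v u}"
    using assms(1) unfolding is_component_def by blast
  have "graph_adj d G u (G u k)"
    unfolding graph_adj_def using assms(3) by blast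
  then show ?thesis
    using assms(2) C by (auto intro: rtranclp.rtrancl_into_rtrancl)
qed

lemma proj_plus_bar0_ctrl_walk:
  assumes "colored_regular V d G" and "v \<in> V"
  shows "proj_plus_bar0 d (ctrl_walk V G (init_state d (\<lambda>x. complex_of_real (p x)))) v
       = complex_of_real (lazy_walk d G p v)"
proof -
  have norm_sq: "complex_of_real (sqrt 2 * sqrt (real d)) * complex_of_real (sqrt 2 * sqrt (real d))
      = of_real (2 * real d)"
    by (simp flip: of_real_mult add: real_sqrt_mult[symmetric])
  have "proj_plus_bar0 d (ctrl_walk V G (init_state d (\<lambda>x. complex_of_real (p x)))) v
      = (\<Sum>k<d. (of_real (p v) + of_real (p (G v k)))
          / (complex_of_real (sqrt 2 * sqrt (real d)) * complex_of_real (sqrt 2 * sqrt (real d))))"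
    unfolding proj_plus_bar0_def UNIV_bool ctrl_walk_def
    by (simp add: colored_regular_preimage[OF assms] init_state_def sum.distrib add_divide_distrib)
  then show ?thesis
    unfolding norm_sq lazy_walk_def by simp
qed

lemma sum_lazy_walk:
  assumes "colored_regular V d G" and "d > 0"
  shows "(\<Sum>v\<in>V. lazy_walk d G p v) = (\<Sum>v\<in>V. p v)"
proof -
  have "(\<Sum>v\<in>V. lazy_walk d G p v)
      = (\<Sum>k<d. (\<Sum>v\<in>V. p v) / (2 * real d) + (\<Sum>v\<in>V. p (G v k)) / (2 * real d))"
    unfolding lazy_walk_def
    by (subst sum.swap) (simp add: sum_divide_distrib sum.distrib add_divide_distrib)
  also have "\<dots> = (\<Sum>k<d. (\<Sum>v\<in>V. p v) / real d)"
  proof (intro sum.cong refl)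
    fix k assume "k \<in> {..<d}"
    then have "(\<Sum>v\<in>V. p (G v k)) = (\<Sum>v\<in>V. p v)"
      using sum.reindex_bij_betw[OF colored_regular_bij_betw[OF assms(1)]] by simp
    then show "(\<Sum>v\<in>V. p v) / (2 * real d) + (\<Sum>v\<in>V. p (G v k)) / (2 * real d)
        = (\<Sum>v\<in>V. p v) / real d"
      by simp
  qed
  finally show ?thesis
    using assms(2) by simp
qed

lemma lazy_walk_const_on_closed:
  assumes "\<forall>u\<in>C. \<forall>k<d. G u k \<in> C" and "\<forall>u\<in>C. p u = c" and "v \<in> C" and "d > 0"
  shows "lazy_walk d G p v = c"
proof -
  have "lazy_walk d G p v = (\<Sum>k<d. c / real d)"
    unfolding lazy_walk_def using assms(1-3) by (intro sum.cong) auto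
  then show ?thesis
    using assms(4) by simp
qed

lemma sum_square_deviation_mean:
  fixes f :: "'a \<Rightarrow> real"
  shows "(\<Sum>v\<in>V. (f v - (\<Sum>u\<in>V. f u) / card V)\<^sup>2)
       = (\<Sum>v\<in>V. (f v)\<^sup>2) - (\<Sum>v\<in>V. f v)\<^sup>2 / card V"
proof (cases "finite V \<and> V \<noteq> {}")
  case True
  define n where "n = real (card V)"
  have "n > 0"
    using True by (simp add: n_def card_gt_0_iff)
  have "(\<Sum>v\<in>V. (f v - sum f V / n)\<^sup>2)
      = (\<Sum>v\<in>V. (f v)\<^sup>2) - 2 * (sum f V / n) * sum f V + n * (sum f V / n)\<^sup>2"
    by (simp add: power2_diff sum.distrib sum_subtractf sum_distrib_left sum_distrib_right
        sum_divide_distrib n_def mult_ac)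
  also have "\<dots> = (\<Sum>v\<in>V. (f v)\<^sup>2) - (sum f V)\<^sup>2 / n"
    using \<open>n > 0\<close> by (simp add: field_simps power2_eq_square)
  finally show ?thesis
    unfolding n_def .
next
  case False
  then show ?thesis
    by auto
qed

lemma accept_prob_real_witness:
  assumes "colored_regular V d G" and "d > 0"
  shows "accept_prob V d G (\<lambda>x. complex_of_real (p x))
       = (\<Sum>v\<in>V. (lazy_walk d G p v)\<^sup>2) - (\<Sum>v\<in>V. p v)\<^sup>2 / card V"
proof -
  define m where "m = (\<Sum>u\<in>V. lazy_walk d G p u) / card V"
  define phi where "phi = proj_plus_bar0 d (ctrl_walk V G (init_state d (\<lambda>x. complex_of_real (p x))))"
  have phi: "phi v = complex_of_real (lazy_walk d G p v)" if "v \<in> V" for v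
    unfolding phi_def using proj_plus_bar0_ctrl_walk[OF assms(1) that] .
  have "(\<Sum>u\<in>V. phi u) / of_nat (card V) = complex_of_real m"
    by (simp add: phi m_def)
  then have "accept_prob V d G (\<lambda>x. complex_of_real (p x)) = (\<Sum>v\<in>V. (lazy_walk d G p v - m)\<^sup>2)"
    unfolding accept_prob_def Let_def phi_def[symmetric]
    by (intro sum.cong) (simp_all add: phi flip: of_real_diff)
  also have "\<dots> = (\<Sum>v\<in>V. (lazy_walk d G p v)\<^sup>2) - (\<Sum>v\<in>V. lazy_walk d G p v)\<^sup>2 / card V"
    unfolding m_def by (rule sum_square_deviation_mean)
  finally show ?thesis
    unfolding sum_lazy_walk[OF assms] .
qed

lemma accept_prob_subset_state_ge:
  assumes "finite V" and "S \<subseteq> V" and "colored_regular V d G" and "d > 0"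
    and "C \<subseteq> S" and closed: "\<forall>u\<in>C. \<forall>k<d. G u k \<in> C"
  shows "card C / card S - card S / card V \<le> accept_prob V d G (subset_state S)"
proof -
  define s where "s = real (card S)"
  define q where "q v = (if v \<in> S then 1 / sqrt s else 0)" for v
  have subset_state: "subset_state S = (\<lambda>x. complex_of_real (q x))"
    by (simp add: subset_state_def q_def s_def fun_eq_iff)
  have "(\<Sum>v\<in>V. q v) = (\<Sum>v\<in>S. q v)"
    by (rule sum.mono_neutral_right) (use assms(1,2) in \<open>auto simp: q_def\<close>)
  also have "\<dots> = sqrt s"
    by (simp add: q_def s_def real_div_sqrt)
  finally have sum_q: "(\<Sum>v\<in>V. q v) = sqrt s" .
  have "\<forall>u\<in>C. q u = 1 / sqrt s"
    using assms(5) by (auto simp: q_def)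
  then have on_C: "lazy_walk d G q v = 1 / sqrt s" if "v \<in> C" for v
    using lazy_walk_const_on_closed[OF closed _ that assms(4)] by blast
  have "card C / s = (\<Sum>v\<in>C. (lazy_walk d G q v)\<^sup>2)"
    by (simp add: on_C power_divide s_def)
  also have "\<dots> \<le> (\<Sum>v\<in>V. (lazy_walk d G q v)\<^sup>2)"
    by (rule sum_mono2) (use assms(1,2,5) in auto)
  finally show ?thesis
    using assms(3,4) by (simp add: subset_state accept_prob_real_witness sum_q s_def)
qed

lemma three_mult_add_power2_le_three_sqrt:
  fixes g :: real
  assumes "0 \<le> g" and "g \<le> 1/2"
  shows "3 * g + g\<^sup>2 \<le> 3 * sqrt g"
proof -
  define t where "t = sqrt g"
  have g: "g = t * t" and "0 \<le> t"
    using assms(1) by (simp_all add: t_def)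
  have "t \<le> 3/4"
    unfolding t_def using assms(2) by (intro real_le_lsqrt) (auto simp: power2_eq_square)
  then have "t ^ 3 \<le> (3/4) ^ 3"
    using \<open>0 \<le> t\<close> by (rule power_mono)
  then have "3 * t + t ^ 3 \<le> 3"
    using \<open>t \<le> 3/4\<close> by (simp add: power_divide)
  then have "t * (3 * t + t ^ 3) \<le> t * 3"
    using \<open>0 \<le> t\<close> by (rule mult_left_mono)
  then show ?thesis
    unfolding g t_def[symmetric] by (simp add: power2_eq_square power3_eq_cube algebra_simps)
qed

lemma one_minus_three_sqrt_le:
  fixes g z c N :: real
  assumes "0 < g" and "g \<le> 1/2" and "0 < N" and "z = N * g" and "(1 - g) * z \<le> c"
  shows "1 - 3 * sqrt g \<le> c / ((1 + g) * z) - (1 + g) * z / N"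
proof -
  have "0 < z"
    using assms(1,3,4) by simp
  have "1 - 2 * g \<le> (1 - g) / (1 + g)"
    using assms(1) by (simp add: field_simps)
  also have "\<dots> = (1 - g) * z / ((1 + g) * z)"
    using \<open>0 < z\<close> by simp
  also have "\<dots> \<le> c / ((1 + g) * z)"
    using assms(1,5) \<open>0 < z\<close> by (intro divide_right_mono) auto
  finally have "1 - 2 * g \<le> c / ((1 + g) * z)" .
  moreover have "(1 + g) * z / N = g + g\<^sup>2"
    using assms(3,4) by (simp add: power2_eq_square field_simps)
  moreover have "3 * g + g\<^sup>2 \<le> 3 * sqrt g"
    using assms(1,2) by (intro three_mult_add_power2_le_three_sqrt) auto
  ultimately show ?thesis
    by linarith
qed

lemma gam_pos: "0 < gam n"
  by (simp add: gam_def NN_def)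

lemma gam_le_half:
  assumes "10 \<le> n"
  shows "gam n \<le> 1/2"
proof -
  have "(2::real) ^ 10 \<le> 2 ^ n"
    using assms by (intro power_increasing) auto
  then have "gam n \<le> (2 ^ 10) powr (-1/10)"
    unfolding gam_def NN_def by (intro powr_mono2') auto
  also have "\<dots> = 1/2"
    by (simp add: powr_realpow[symmetric] powr_powr powr_minus_divide)
  finally show ?thesis .
qed

lemma zz_eq_NN_mult_gam: "zz n = NN n * gam n"
proof -
  have "zz n = NN n * inverse (NN n powr (1/10))"
    unfolding zz_def ell_def by (rule divide_inverse)
  also have "\<dots> = NN n * gam n"
    unfolding gam_def powr_minus[symmetric] minus_divide_left ..
  finally show ?thesis .
qed

theorem corollary16:
  shows "\<exists>n0::nat. \<forall>n\<ge>n0. \<forall>(S::nat set) (G::nat \<Rightarrow> nat \<Rightarrow> nat) (C::nat set).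
     S \<subseteq> {..<2^n} \<and> real (card S) = zeta n \<and>
     colored_regular {..<2^n} 100 G \<and> is_component {..<2^n} 100 G C \<and>
     C \<subseteq> S \<and> real (card C) \<ge> (1 - gam n) * zz n
     \<longrightarrow> accept_prob {..<2^n} 100 G (subset_state S) \<ge> 1 - 3 * sqrt (gam n)"
proof (intro exI[of _ 10] allI impI, elim conjE)
  fix n :: nat and S G C
  assume "10 \<le> n" and "S \<subseteq> {..<2^n}" and card_S: "real (card S) = zeta n"
    and "colored_regular {..<2^n} 100 G" and "is_component {..<2^n} 100 G C"
    and "C \<subseteq> S" and "real (card C) \<ge> (1 - gam n) * zz n"
  have "card C / card S - card S / card {..<(2::nat)^n}
      \<le> accept_prob {..<2^n} 100 G (subset_state S)"
    using is_component_closed[OF \<open>is_component {..<2^n} 100 G C\<close>]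
    by (intro accept_prob_subset_state_ge) (simp_all add: \<open>S \<subseteq> {..<2^n}\<close>
        \<open>colored_regular {..<2^n} 100 G\<close> \<open>C \<subseteq> S\<close>)
  moreover have "1 - 3 * sqrt (gam n) \<le> card C / ((1 + gam n) * zz n) - (1 + gam n) * zz n / NN n"
    using gam_pos[of n] gam_le_half[OF \<open>10 \<le> n\<close>] zz_eq_NN_mult_gam[of n] \<open>real (card C) \<ge> (1 - gam n) * zz n\<close>
    by (intro one_minus_three_sqrt_le) (auto simp: NN_def)
  ultimately show "accept_prob {..<2^n} 100 G (subset_state S) \<ge> 1 - 3 * sqrt (gam n)"
    using card_S by (simp add: zeta_def NN_def)
qed

end
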